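(* Consider the spot market described in the context, with fixed leader productions $\mathbf x\in\mathbb{R}_+^M$, and suppose $f_j=f$ for every follower $j$. Then the spot market has a unique Nash equilibrium, given for every follower $j$ by \[y_j=\Big[\frac1{N+1}\Big(\alpha_y+f-\sum_{i=1}^Mx_i\Big)\Big]_0^k.\]
   Context: Model: $M\ge1$ leaders, $N\ge2$ followers; inverse demand $P(q)=\alpha-\beta q$, $\alpha,\beta>0$; follower marginal cost $c>0$; each follower has capacity $k>0$. Given leader productions $x_1,\dots,x_M\ge0$ and follower forward positions $f_1,\dots,f_N\in\mathbb{R}$, the spot market is the game among the $N$ followers in which follower $j$ chooses $y_j\in[0,k]$ to maximize $P(\sum_i x_i+\sum_{j'}y_{j'})(y_j-f_j)-cy_j$. Normalized follower demand: $\alpha_y=(\alpha-c)/\beta$. For $a\le b$, $[z]_a^b=\min(\max(z,a),b)$. *)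

theory Defs
  imports Complex_Main
begin

text \<open>Clipping [z]_a^b = min(max(z,a),b).\<close>
definition clip :: "real \<Rightarrow> real \<Rightarrow> real \<Rightarrow> real" where
  "clip a b z = min (max z a) b"

text \<open>Payoff of follower j in the spot market: leaders 0..M-1 produce x i,
  followers 0..N-1 produce y j', forward positions fw j, inverse demand
  P(q) = alpha - beta q, marginal cost c.\<close>
definition follower_payoff ::
  "real \<Rightarrow> real \<Rightarrow> real \<Rightarrow> nat \<Rightarrow> nat \<Rightarrow> (nat \<Rightarrow> real) \<Rightarrow> (nat \<Rightarrow> real) \<Rightarrow> (nat \<Rightarrow> real) \<Rightarrow> nat \<Rightarrow> real" where
  "follower_payoff \<alpha> \<beta> c M N x fw y j =
     (\<alpha> - \<beta> * ((\<Sum>i<M. x i) + (\<Sum>j'<N. y j'))) * (y j - fw j) - c * y j"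

definition spot_NE ::
  "real \<Rightarrow> real \<Rightarrow> real \<Rightarrow> real \<Rightarrow> nat \<Rightarrow> nat \<Rightarrow> (nat \<Rightarrow> real) \<Rightarrow> (nat \<Rightarrow> real) \<Rightarrow> (nat \<Rightarrow> real) \<Rightarrow> bool" where
  "spot_NE \<alpha> \<beta> c k M N x fw y \<longleftrightarrow>
     (\<forall>j<N. 0 \<le> y j \<and> y j \<le> k) \<and>
     (\<forall>j<N. \<forall>z. 0 \<le> z \<and> z \<le> k \<longrightarrow>
        follower_payoff \<alpha> \<beta> c M N x fw (y(j := z)) j \<le> follower_payoff \<alpha> \<beta> c M N x fw y j)"

end

theory Submission
  imports Defs
begin

text \<open>In its own quantity \<open>z\<close>, follower \<open>j\<close>'s payoff is \<open>\<beta> (B z - z\<^sup>2)\<close> plus a constant, where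
  \<open>B\<close> is \<open>\<alpha>\<^sub>y + f - \<Sigma>x\<close> minus the output of the other followers, so its best reply is the
  point of \<open>[0,k]\<close> nearest to \<open>B / 2\<close>. In terms of the total follower output \<open>S\<close> this reads
  \<open>y\<^sub>j = [A - S]\<^sub>0\<^sup>k\<close> with \<open>A = \<alpha>\<^sub>y + f - \<Sigma>x\<close>, the same for every \<open>j\<close>. Hence every equilibrium is
  symmetric, \<open>y\<^sub>j = t\<close>, and \<open>t = [A - N t]\<^sub>0\<^sup>k\<close> has the unique solution \<open>t = [A / (N + 1)]\<^sub>0\<^sup>k\<close>.\<close>

lemma clip_eq_iff:
  fixes a b t v :: real
  assumes "a \<le> b"
  shows "t = clip a b v \<longleftrightarrow> a \<le> t \<and> t \<le> b \<and> (a < t \<longrightarrow> t \<le> v) \<and> (t < b \<longrightarrow> v \<le> t)"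
  using assms unfolding clip_def by (auto simp: min_def max_def)

lemma clip_fixed_point_iff:
  fixes a b t A n :: real
  assumes "a \<le> b" and "-1 < n"
  shows "t = clip a b (A - n * t) \<longleftrightarrow> t = clip a b (A / (n + 1))"
proof -
  have "t \<le> A - n * t \<longleftrightarrow> t \<le> A / (n + 1)" "A - n * t \<le> t \<longleftrightarrow> A / (n + 1) \<le> t"
    using assms(2) by (simp_all add: pos_le_divide_eq pos_divide_le_eq algebra_simps)
  then show ?thesis
    using assms(1) by (simp add: clip_eq_iff)
qed

lemma clip_dist_le:
  fixes a b m z :: real
  assumes "a \<le> z" and "z \<le> b"
  shows "\<bar>clip a b m - m\<bar> \<le> \<bar>z - m\<bar>"
  using assms unfolding clip_def by (auto simp: min_def max_def)

lemma clip_nearest_iff: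
  fixes a b m z0 :: real
  assumes "a \<le> b"
  shows "(a \<le> z0 \<and> z0 \<le> b \<and> (\<forall>z. a \<le> z \<and> z \<le> b \<longrightarrow> (z0 - m)\<^sup>2 \<le> (z - m)\<^sup>2))
    \<longleftrightarrow> z0 = clip a b m"
proof -
  have clip_in: "a \<le> clip a b m" "clip a b m \<le> b"
    using assms unfolding clip_def by auto
  have "(\<forall>z. a \<le> z \<and> z \<le> b \<longrightarrow> \<bar>z0 - m\<bar> \<le> \<bar>z - m\<bar>) \<longleftrightarrow> \<bar>z0 - m\<bar> \<le> \<bar>clip a b m - m\<bar>"
    using clip_in clip_dist_le order_trans by blast
  moreover have "a \<le> z0 \<and> z0 \<le> b \<and> \<bar>z0 - m\<bar> \<le> \<bar>clip a b m - m\<bar> \<longleftrightarrow> z0 = clip a b m"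
    using assms unfolding clip_def by (auto simp: min_def max_def)
  ultimately show ?thesis
    by (simp add: abs_le_square_iff)
qed

lemma concave_quadratic_argmax_iff:
  fixes a b u \<beta> z0 :: real
  assumes "\<beta> > 0" and "a \<le> b"
  shows "(a \<le> z0 \<and> z0 \<le> b \<and> (\<forall>z. a \<le> z \<and> z \<le> b \<longrightarrow> u * z - \<beta> * z\<^sup>2 \<le> u * z0 - \<beta> * z0\<^sup>2))
    \<longleftrightarrow> z0 = clip a b (u / (2 * \<beta>))"
proof -
  define m where "m = u / (2 * \<beta>)"
  have "u * z - \<beta> * z\<^sup>2 = \<beta> * (m\<^sup>2 - (z - m)\<^sup>2)" for z
    using assms(1) unfolding m_def by (simp add: field_simps power2_eq_square)
  then have "u * z - \<beta> * z\<^sup>2 \<le> u * z0 - \<beta> * z0\<^sup>2 \<longleftrightarrow> (z0 - m)\<^sup>2 \<le> (z - m)\<^sup>2" for z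
    using assms(1) by (simp add: mult_le_cancel_left_pos)
  then show ?thesis
    using clip_nearest_iff[OF assms(2)] by (simp add: m_def)
qed

lemma sum_fun_upd:
  fixes y :: "'a \<Rightarrow> 'b::ab_group_add"
  assumes "finite A" and "j \<in> A"
  shows "sum (y(j := z)) A = sum y A - y j + z"
proof -
  have "sum (y(j := z)) (A - {j}) = sum y (A - {j})"
    by (rule sum.cong) auto
  then have "sum (y(j := z)) A = z + sum y (A - {j})"
    using sum.remove[OF assms, of "y(j := z)"] by simp
  also have "\<dots> = sum y A - y j + z"
    using assms by (simp add: sum_diff1 algebra_simps)
  finally show ?thesis .
qed

lemma follower_payoff_fun_upd:
  fixes \<alpha> \<beta> c z :: real and M N j :: nat and x fw y :: "nat \<Rightarrow> real"
  assumes "j < N" and "\<beta> \<noteq> 0"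
  defines "X \<equiv> \<Sum>i<M. x i" and "Q \<equiv> (\<Sum>j'<N. y j') - y j"
  shows "follower_payoff \<alpha> \<beta> c M N x fw (y(j := z)) j
    = \<beta> * ((\<alpha> - c) / \<beta> + fw j - X - Q) * z - \<beta> * z\<^sup>2 - fw j * (\<alpha> - \<beta> * (X + Q))"
proof -
  have "(\<Sum>j'<N. (y(j := z)) j') = Q + z"
    using sum_fun_upd[of "{..<N}" j y z] assms(1) unfolding Q_def by simp
  then show ?thesis
    using assms(2) unfolding follower_payoff_def X_def[symmetric]
    by (simp add: field_simps power2_eq_square)
qed

lemma follower_best_response_iff:
  fixes \<alpha> \<beta> c k :: real and x fw y :: "nat \<Rightarrow> real"
  assumes "\<beta> > 0" and "0 \<le> k" and "j < N"
  shows "(0 \<le> y j \<and> y j \<le> k \<and> (\<forall>z. 0 \<le> z \<and> z \<le> k \<longrightarrow>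
      follower_payoff \<alpha> \<beta> c M N x fw (y(j := z)) j \<le> follower_payoff \<alpha> \<beta> c M N x fw y j))
    \<longleftrightarrow> y j = clip 0 k ((\<alpha> - c) / \<beta> + fw j - (\<Sum>i<M. x i) - (\<Sum>j'<N. y j'))"
proof -
  \<comment> \<open>\<open>t = [B / 2]\<close> iff \<open>t = [B - t]\<close>; the latter folds \<open>y j\<close> back into the total output.\<close>
  define B where "B = (\<alpha> - c) / \<beta> + fw j - (\<Sum>i<M. x i) - ((\<Sum>j'<N. y j') - y j)"
  have payoff: "follower_payoff \<alpha> \<beta> c M N x fw (y(j := z)) j
      = (\<beta> * B) * z - \<beta> * z\<^sup>2 - fw j * (\<alpha> - \<beta> * ((\<Sum>i<M. x i) + ((\<Sum>j'<N. y j') - y j)))" for z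
    unfolding B_def using follower_payoff_fun_upd[OF assms(3)] assms(1) by simp
  have "follower_payoff \<alpha> \<beta> c M N x fw y j = follower_payoff \<alpha> \<beta> c M N x fw (y(j := y j)) j"
    by simp
  then have "(0 \<le> y j \<and> y j \<le> k \<and> (\<forall>z. 0 \<le> z \<and> z \<le> k \<longrightarrow>
      follower_payoff \<alpha> \<beta> c M N x fw (y(j := z)) j \<le> follower_payoff \<alpha> \<beta> c M N x fw y j))
    \<longleftrightarrow> y j = clip 0 k ((\<beta> * B) / (2 * \<beta>))"
    unfolding payoff using concave_quadratic_argmax_iff[OF assms(1,2)] by simp
  also have "\<dots> \<longleftrightarrow> y j = clip 0 k (B - 1 * y j)"
    using clip_fixed_point_iff[OF assms(2), of 1 "y j" B] assms(1) by simp
  also have "B - 1 * y j = (\<alpha> - c) / \<beta> + fw j - (\<Sum>i<M. x i) - (\<Sum>j'<N. y j')"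
    by (simp add: B_def)
  finally show ?thesis .
qed

lemma spot_NE_iff:
  fixes \<alpha> \<beta> c k :: real and x fw y :: "nat \<Rightarrow> real"
  assumes "\<beta> > 0" and "0 \<le> k"
  shows "spot_NE \<alpha> \<beta> c k M N x fw y
    \<longleftrightarrow> (\<forall>j<N. y j = clip 0 k ((\<alpha> - c) / \<beta> + fw j - (\<Sum>i<M. x i) - (\<Sum>j'<N. y j')))"
proof -
  have "spot_NE \<alpha> \<beta> c k M N x fw y \<longleftrightarrow> (\<forall>j<N. 0 \<le> y j \<and> y j \<le> k \<and> (\<forall>z. 0 \<le> z \<and> z \<le> k \<longrightarrow>
      follower_payoff \<alpha> \<beta> c M N x fw (y(j := z)) j \<le> follower_payoff \<alpha> \<beta> c M N x fw y j))"
    unfolding spot_NE_def by blast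
  then show ?thesis
    using follower_best_response_iff[OF assms] by simp
qed

lemma symmetric_clip_fixed_point_iff:
  fixes a b A :: real and y :: "nat \<Rightarrow> real"
  assumes "a \<le> b"
  shows "(\<forall>j<N. y j = clip a b (A - (\<Sum>j'<N. y j')))
    \<longleftrightarrow> (\<forall>j<N. y j = clip a b (A / (real N + 1)))"
proof -
  have symmetric_fixed_point: "(\<forall>j<N. y j = t) \<Longrightarrow>
      t = clip a b (A - (\<Sum>j'<N. y j')) \<longleftrightarrow> t = clip a b (A / (real N + 1))" for t
    using clip_fixed_point_iff[OF assms, of "real N" t A] by simp
  show ?thesis
  proof
    assume "\<forall>j<N. y j = clip a b (A - (\<Sum>j'<N. y j'))"
    with symmetric_fixed_point[of "clip a b (A - (\<Sum>j'<N. y j'))"]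
    show "\<forall>j<N. y j = clip a b (A / (real N + 1))"
      by metis
  next
    assume "\<forall>j<N. y j = clip a b (A / (real N + 1))"
    with symmetric_fixed_point[of "clip a b (A / (real N + 1))"]
    show "\<forall>j<N. y j = clip a b (A - (\<Sum>j'<N. y j'))"
      by metis
  qed
qed

theorem proposition2:
  fixes \<alpha> \<beta> c k f :: real and M N :: nat and x fw :: "nat \<Rightarrow> real"
  assumes "M \<ge> 1" and "N \<ge> 2" and "\<alpha> > 0" and "\<beta> > 0" and "c > 0" and "k > 0"
    and "\<forall>i<M. x i \<ge> 0"
    and "\<forall>j<N. fw j = f"
  shows "(\<exists>y. spot_NE \<alpha> \<beta> c k M N x fw y) \<and>
    (\<forall>y. spot_NE \<alpha> \<beta> c k M N x fw y \<longleftrightarrow>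
      (\<forall>j<N. y j = clip 0 k ((1 / (real N + 1)) * ((\<alpha> - c) / \<beta> + f - (\<Sum>i<M. x i)))))"
proof -
  define A where "A = (\<alpha> - c) / \<beta> + f - (\<Sum>i<M. x i)"
  define t where "t = clip 0 k (A / (real N + 1))"
  have NE_iff: "spot_NE \<alpha> \<beta> c k M N x fw y \<longleftrightarrow> (\<forall>j<N. y j = t)" for y
  proof -
    have "spot_NE \<alpha> \<beta> c k M N x fw y
      \<longleftrightarrow> (\<forall>j<N. y j = clip 0 k ((\<alpha> - c) / \<beta> + fw j - (\<Sum>i<M. x i) - (\<Sum>j'<N. y j')))"
      using assms(4,6) by (simp add: spot_NE_iff)
    also have "\<dots> \<longleftrightarrow> (\<forall>j<N. y j = clip 0 k (A - (\<Sum>j'<N. y j')))"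
      using assms(8) unfolding A_def by simp
    also have "\<dots> \<longleftrightarrow> (\<forall>j<N. y j = t)"
      unfolding t_def using symmetric_clip_fixed_point_iff[of 0 k N y A] assms(6) by simp
    finally show ?thesis .
  qed
  have "clip 0 k ((1 / (real N + 1)) * ((\<alpha> - c) / \<beta> + f - (\<Sum>i<M. x i))) = t"
    unfolding t_def A_def by simp
  then show ?thesis
    unfolding NE_iff by (auto intro: exI[of _ "\<lambda>_. t"])
qed

end
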